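(* Let $\mathcal{M}$ be a separable metric space, $f:\mathcal{M}\to\mathcal{M}$ continuous, and $\mathcal{X}\subseteq\mathcal{M}$ forward invariant under $f$ and path connected, with $\mathcal{W}$ the set of $\omega$-limit sets of $x_{k+1}=f(x_k)$ on $\mathcal{X}$. Suppose every trajectory on $\mathcal{X}$ is forward precompact in $\mathcal{X}$ and $\mathcal{W}$ is countable. If $\mathcal{W}$ has more than one element, then there do not exist a separable metric space $\mathcal{Z}$, a continuous $g:\mathcal{Z}\to\mathcal{Z}$ such that $z_{k+1}=g(z_k)$ has closed basins, and a continuous one-to-one map $F:\mathcal{X}\to\mathcal{Z}$ with $F\circ f=g\circ F$ on $\mathcal{X}$.
   Context: Forward orbit of $\xi$: $\{f^k(\xi)\mid k\in\mathbb{N}\}$; forward precompact in $\mathcal{X}$ means its closure in $\mathcal{X}$ is compact. $\omega_{\mathcal{X}}(\xi)$ is the set of $x\in\mathcal{X}$ with $f^{k_j}(\xi)\to x$ for some $k_j\to\infty$; $\mathcal{W}=\{\omega_{\mathcal{X}}(\xi)\mid\xi\in\mathcal{X}\}$. For $g$ on $\mathcal{Z}$, $\omega$-limit sets are defined analogously; domain of attraction $D^+_{\mathcal{Z}}(\Omega)=\{\zeta\in\mathcal{Z}\mid\omega_{\mathcal{Z}}(\zeta)=\Omega\}$; closed basins means every such domain of attraction is closed. *)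

theory Defs
  imports "HOL-Analysis.Analysis"
begin

definition fwd_orbit :: "('a \<Rightarrow> 'a) \<Rightarrow> 'a \<Rightarrow> 'a set" where
  "fwd_orbit f \<xi> = {(f ^^ k) \<xi> | k. True}"

definition fwd_precompact_in :: "('a::metric_space \<Rightarrow> 'a) \<Rightarrow> 'a set \<Rightarrow> 'a \<Rightarrow> bool" where
  "fwd_precompact_in f X \<xi> \<longleftrightarrow> compact (X \<inter> closure (fwd_orbit f \<xi>))"

definition omega_limit_in :: "('a::metric_space \<Rightarrow> 'a) \<Rightarrow> 'a set \<Rightarrow> 'a \<Rightarrow> 'a set" where
  "omega_limit_in f X \<xi> =
     {x \<in> X. \<exists>r. strict_mono r \<and> (\<lambda>j. (f ^^ (r j)) \<xi>) \<longlonglongrightarrow> x}"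

definition omega_sets :: "('a::metric_space \<Rightarrow> 'a) \<Rightarrow> 'a set \<Rightarrow> 'a set set" where
  "omega_sets f X = {omega_limit_in f X \<xi> | \<xi>. \<xi> \<in> X}"

definition domain_of_attraction :: "('b::metric_space \<Rightarrow> 'b) \<Rightarrow> 'b set \<Rightarrow> 'b set" where
  "domain_of_attraction g \<Omega> = {\<zeta>. omega_limit_in g UNIV \<zeta> = \<Omega>}"

definition closed_basins :: "('b::metric_space \<Rightarrow> 'b) \<Rightarrow> bool" where
  "closed_basins g \<longleftrightarrow> (\<forall>\<zeta>. closed (domain_of_attraction g (omega_limit_in g UNIV \<zeta>)))"

end

theory Submission
  imports Defs
begin

text \<open>
  Through the conjugacy, \<open>F\<close> maps the \<open>\<omega>\<close>-limit set of \<open>\<xi>\<close> onto that of \<open>F \<xi>\<close>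
  (precompactness supplies the limit points in \<open>X\<close>), so by injectivity
  \<open>\<omega>(\<xi>) = \<omega>(\<eta>)\<close> holds iff \<open>F \<xi>\<close> lies in the basin of \<open>\<omega>(F \<eta>)\<close>. Closed basins thus
  make the level sets of \<open>\<xi> \<mapsto> \<omega>(\<xi>)\<close> relatively closed in \<open>X\<close>. Along a path joining
  two points with different \<open>\<omega>\<close>-limit sets, these level sets would split \<open>[0,1]\<close> into
  countably many, but at least two, disjoint nonempty closed sets, which Sierpinski's
  theorem forbids.
\<close>

lemma funpow_in_invariant:
  assumes "f ` X \<subseteq> X" "x \<in> X"
  shows "(f ^^ k) x \<in> X"
  using assms by (induction k) auto

lemma funpow_semiconj:
  assumes "f ` X \<subseteq> X" "\<forall>x\<in>X. F (f x) = g (F x)" "x \<in> X"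
  shows "F ((f ^^ k) x) = (g ^^ k) (F x)"
  using assms by (induction k) (auto simp: funpow_in_invariant)

lemma image_omega_limit_in_subset:
  fixes f :: "'a::metric_space \<Rightarrow> 'a" and g :: "'b::metric_space \<Rightarrow> 'b"
  assumes fX: "f ` X \<subseteq> X" and conj: "\<forall>x\<in>X. F (f x) = g (F x)" and "\<xi> \<in> X"
    and cF: "continuous_on X F"
  shows "F ` omega_limit_in f X \<xi> \<subseteq> omega_limit_in g UNIV (F \<xi>)"
proof
  fix z assume "z \<in> F ` omega_limit_in f X \<xi>"
  then obtain x r where x: "x \<in> X" "z = F x" "strict_mono r"
    and lim: "(\<lambda>j. (f ^^ r j) \<xi>) \<longlonglongrightarrow> x"
    by (auto simp: omega_limit_in_def)
  have "(F \<circ> (\<lambda>j. (f ^^ r j) \<xi>)) \<longlonglongrightarrow> F x"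
    using cF lim x(1) funpow_in_invariant[OF fX \<open>\<xi> \<in> X\<close>]
    by (auto simp: continuous_on_sequentially)
  moreover have "F \<circ> (\<lambda>j. (f ^^ r j) \<xi>) = (\<lambda>j. (g ^^ r j) (F \<xi>))"
    using funpow_semiconj[OF fX conj \<open>\<xi> \<in> X\<close>] by auto
  ultimately show "z \<in> omega_limit_in g UNIV (F \<xi>)"
    using x by (auto simp: omega_limit_in_def)
qed

lemma omega_limit_in_subset_image:
  fixes f :: "'a::metric_space \<Rightarrow> 'a" and g :: "'b::metric_space \<Rightarrow> 'b"
  assumes fX: "f ` X \<subseteq> X" and conj: "\<forall>x\<in>X. F (f x) = g (F x)" and "\<xi> \<in> X"
    and pc: "fwd_precompact_in f X \<xi>" and cF: "continuous_on X F"
  shows "omega_limit_in g UNIV (F \<xi>) \<subseteq> F ` omega_limit_in f X \<xi>"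
proof
  fix z assume "z \<in> omega_limit_in g UNIV (F \<xi>)"
  then obtain r where r: "strict_mono r" "(\<lambda>j. (g ^^ r j) (F \<xi>)) \<longlonglongrightarrow> z"
    by (auto simp: omega_limit_in_def)
  define K where "K = X \<inter> closure (fwd_orbit f \<xi>)"
  have "compact K"
    using pc by (simp add: fwd_precompact_in_def K_def)
  moreover have "(f ^^ r j) \<xi> \<in> fwd_orbit f \<xi>" for j
    by (auto simp: fwd_orbit_def)
  then have "\<forall>j. (f ^^ r j) \<xi> \<in> K"
    using funpow_in_invariant[OF fX \<open>\<xi> \<in> X\<close>] closure_subset by (auto simp: K_def)
  ultimately obtain l s where "l \<in> K" "strict_mono s"
    and lim: "(\<lambda>j. (f ^^ (r \<circ> s) j) \<xi>) \<longlonglongrightarrow> l"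
    unfolding compact_eq_seq_compact_metric seq_compact_def o_def by meson
  then have "l \<in> X" and "strict_mono (r \<circ> s)"
    using r(1) strict_mono_o by (auto simp: K_def)
  then have l: "l \<in> omega_limit_in f X \<xi>"
    using lim by (auto simp: omega_limit_in_def)
  have "(\<lambda>j. (g ^^ r j) (F \<xi>)) \<circ> s = F \<circ> (\<lambda>j. (f ^^ (r \<circ> s) j) \<xi>)"
    using funpow_semiconj[OF fX conj \<open>\<xi> \<in> X\<close>] by auto
  moreover have "(F \<circ> (\<lambda>j. (f ^^ (r \<circ> s) j) \<xi>)) \<longlonglongrightarrow> F l"
    using cF lim \<open>l \<in> X\<close> funpow_in_invariant[OF fX \<open>\<xi> \<in> X\<close>]
    by (auto simp: continuous_on_sequentially)
  ultimately have "z = F l"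
    using LIMSEQ_subseq_LIMSEQ[OF r(2) \<open>strict_mono s\<close>] LIMSEQ_unique by metis
  then show "z \<in> F ` omega_limit_in f X \<xi>"
    using l by blast
qed

lemma omega_limit_in_image:
  fixes f :: "'a::metric_space \<Rightarrow> 'a" and g :: "'b::metric_space \<Rightarrow> 'b"
  assumes "f ` X \<subseteq> X" "\<forall>x\<in>X. F (f x) = g (F x)" "\<xi> \<in> X"
    and "fwd_precompact_in f X \<xi>" "continuous_on X F"
  shows "omega_limit_in g UNIV (F \<xi>) = F ` omega_limit_in f X \<xi>"
  by (intro equalityI omega_limit_in_subset_image[OF assms]
      image_omega_limit_in_subset[OF assms(1-3,5)])

lemma omega_limit_in_eq_iff_domain_of_attraction:
  fixes f :: "'a::metric_space \<Rightarrow> 'a" and g :: "'b::metric_space \<Rightarrow> 'b"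
  assumes "f ` X \<subseteq> X" "\<forall>x\<in>X. F (f x) = g (F x)"
    and "\<forall>\<xi>\<in>X. fwd_precompact_in f X \<xi>" "continuous_on X F" "inj_on F X"
    and "\<xi> \<in> X" "\<eta> \<in> X"
  shows "omega_limit_in f X \<xi> = omega_limit_in f X \<eta> \<longleftrightarrow>
         F \<xi> \<in> domain_of_attraction g (omega_limit_in g UNIV (F \<eta>))"
proof -
  have "omega_limit_in f X \<zeta> \<subseteq> X" for \<zeta>
    by (auto simp: omega_limit_in_def)
  then have "omega_limit_in f X \<xi> = omega_limit_in f X \<eta> \<longleftrightarrow>
             F ` omega_limit_in f X \<xi> = F ` omega_limit_in f X \<eta>"
    using inj_on_image_eq_iff[OF \<open>inj_on F X\<close>] by metis
  also have "\<dots> \<longleftrightarrow> omega_limit_in g UNIV (F \<xi>) = omega_limit_in g UNIV (F \<eta>)"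
    using omega_limit_in_image[OF assms(1,2) _ _ assms(4)] assms(3,6,7) by simp
  finally show ?thesis
    by (simp add: domain_of_attraction_def)
qed

lemma closedin_omega_limit_in_level_set:
  fixes f :: "'a::metric_space \<Rightarrow> 'a" and g :: "'b::metric_space \<Rightarrow> 'b"
  assumes "closed_basins g" "f ` X \<subseteq> X" "\<forall>x\<in>X. F (f x) = g (F x)"
    and "\<forall>\<xi>\<in>X. fwd_precompact_in f X \<xi>" "continuous_on X F" "inj_on F X" "\<eta> \<in> X"
  shows "closedin (top_of_set X) {\<xi> \<in> X. omega_limit_in f X \<xi> = omega_limit_in f X \<eta>}"
proof -
  define D where "D = domain_of_attraction g (omega_limit_in g UNIV (F \<eta>))"
  have "{\<xi> \<in> X. omega_limit_in f X \<xi> = omega_limit_in f X \<eta>} = X \<inter> F -` D"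
    using omega_limit_in_eq_iff_domain_of_attraction[OF assms(2-6) _ \<open>\<eta> \<in> X\<close>]
    by (auto simp: D_def)
  moreover have "closed D"
    using \<open>closed_basins g\<close> by (simp add: closed_basins_def D_def)
  ultimately show ?thesis
    using continuous_closedin_preimage[OF \<open>continuous_on X F\<close>] by simp
qed

lemma real_interval_countable_closed_level_sets_const:
  fixes h :: "real \<Rightarrow> 'c"
  assumes "a \<le> b" "countable (h ` {a..b})"
    and closed: "\<And>t. t \<in> {a..b} \<Longrightarrow> closed {s \<in> {a..b}. h s = h t}"
  shows "h a = h b"
proof -
  define level where "level y = {s \<in> {a..b}. h s = y}" for y
  have "level ` h ` {a..b} = {{a..b}}"
  proof (rule real_Sierpinski_lemma)
    show "pairwise disjnt (level ` h ` {a..b})"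
      by (auto simp: level_def pairwise_def disjnt_iff)
    show "\<Union> (level ` h ` {a..b}) = {a..b}"
      by (auto simp: level_def)
  qed (use assms in \<open>auto simp: level_def\<close>)
  moreover have "level (h a) \<in> level ` h ` {a..b}"
    using \<open>a \<le> b\<close> by simp
  ultimately have "b \<in> level (h a)"
    using \<open>a \<le> b\<close> by simp
  then show ?thesis
    by (simp add: level_def)
qed

lemma path_connected_countable_closedin_level_sets_const:
  assumes "path_connected S" "countable (\<phi> ` S)"
    and closed: "\<And>x. x \<in> S \<Longrightarrow> closedin (top_of_set S) {y \<in> S. \<phi> y = \<phi> x}"
    and "x \<in> S" "y \<in> S"
  shows "\<phi> x = \<phi> y"
proof -
  obtain \<gamma> where \<gamma>: "path \<gamma>" "path_image \<gamma> \<subseteq> S" "pathstart \<gamma> = x" "pathfinish \<gamma> = y"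
    using assms(1,4,5) by (meson path_connected_def)
  have \<gamma>S: "\<gamma> \<in> {0..1} \<rightarrow> S"
    using \<gamma>(2) by (auto simp: path_image_def)
  have cont: "continuous_on {0..1} \<gamma>"
    using \<gamma>(1) by (simp add: path_def)
  have "(\<phi> \<circ> \<gamma>) 0 = (\<phi> \<circ> \<gamma>) 1"
  proof (rule real_interval_countable_closed_level_sets_const)
    have "(\<phi> \<circ> \<gamma>) ` {0..1} \<subseteq> \<phi> ` S"
      using \<gamma>S by auto
    then show "countable ((\<phi> \<circ> \<gamma>) ` {0..1})"
      using \<open>countable (\<phi> ` S)\<close> by (rule countable_subset)
    fix t :: real assume "t \<in> {0..1}"
    then have "closedin (top_of_set {0..1}) ({0..1} \<inter> \<gamma> -` {y \<in> S. \<phi> y = \<phi> (\<gamma> t)})"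
      using \<gamma>S by (intro continuous_closedin_preimage_gen[OF cont \<gamma>S closed]) auto
    moreover have "{0..1} \<inter> \<gamma> -` {y \<in> S. \<phi> y = \<phi> (\<gamma> t)} = {s \<in> {0..1}. (\<phi> \<circ> \<gamma>) s = (\<phi> \<circ> \<gamma>) t}"
      using \<gamma>S by auto
    ultimately show "closed {s \<in> {0..1}. (\<phi> \<circ> \<gamma>) s = (\<phi> \<circ> \<gamma>) t}"
      using closedin_closed_trans[OF _ closed_atLeastAtMost] by metis
  qed simp
  then show ?thesis
    using \<gamma>(3,4) by (simp add: pathstart_def pathfinish_def)
qed

theorem corollary22:
  fixes f :: "'a::metric_space \<Rightarrow> 'a" and X :: "'a set"
  assumes "separable_space (euclidean :: 'a topology)"
    and "continuous_on UNIV f"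
    and "f ` X \<subseteq> X"
    and "path_connected X"
    and "\<forall>\<xi>\<in>X. fwd_precompact_in f X \<xi>"
    and "countable (omega_sets f X)"
    and "\<exists>A B. A \<in> omega_sets f X \<and> B \<in> omega_sets f X \<and> A \<noteq> B"
  shows "\<not> (\<exists>(g :: 'b::metric_space \<Rightarrow> 'b) F.
              separable_space (euclidean :: 'b topology) \<and>
              continuous_on UNIV g \<and> closed_basins g \<and>
              continuous_on X F \<and> inj_on F X \<and>
              (\<forall>x\<in>X. F (f x) = g (F x)))"
proof
  assume "\<exists>(g :: 'b::metric_space \<Rightarrow> 'b) F.
              separable_space (euclidean :: 'b topology) \<and>
              continuous_on UNIV g \<and> closed_basins g \<and>
              continuous_on X F \<and> inj_on F X \<and>
              (\<forall>x\<in>X. F (f x) = g (F x))"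
  then obtain g :: "'b \<Rightarrow> 'b" and F where "closed_basins g" "continuous_on X F"
    "inj_on F X" "\<forall>x\<in>X. F (f x) = g (F x)"
    by blast
  then have "\<And>\<eta>. \<eta> \<in> X \<Longrightarrow>
      closedin (top_of_set X) {\<xi> \<in> X. omega_limit_in f X \<xi> = omega_limit_in f X \<eta>}"
    using closedin_omega_limit_in_level_set assms(3,5) by blast
  moreover have "omega_limit_in f X ` X = omega_sets f X"
    by (auto simp: omega_sets_def)
  ultimately have "omega_limit_in f X \<xi> = omega_limit_in f X \<eta>" if "\<xi> \<in> X" "\<eta> \<in> X" for \<xi> \<eta>
    by (intro path_connected_countable_closedin_level_sets_const[OF assms(4)])
      (simp_all add: assms(6) that)
  moreover obtain A B where "A \<in> omega_sets f X" "B \<in> omega_sets f X" "A \<noteq> B"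
    using assms(7) by blast
  ultimately show False
    unfolding omega_sets_def by blast
qed

end
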